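(* Let $F$ be a graph of diameter $2$, $n=|V(F)|$, $t=\delta(F)$, and let $l>n$ be an integer. If $C_{l-1}^{n-1}>n!\,C_{l-1}^{n-t-1}$, then $f_{2l}<z_1$.
   Context: All graphs are simple, finite, undirected. The $F$-degree of a vertex $v$ in $G$ is the number of subgraphs of $G$ (not necessarily induced) isomorphic to $F$ and containing $v$. $A_{2l-1}$ is the graph with vertex set $\{1,\dots,2l-1\}$ in which distinct $i,j$ are adjacent iff $|i-j|\le l-1$; $F_{2l}$ is obtained from $A_{2l-1}$ by adding a new vertex $2l$ joined exactly to $1,\dots,t$. $z_1$ is the $F$-degree of vertex $1$ in $A_{2l-1}$ and $f_{2l}$ the $F$-degree of vertex $2l$ in $F_{2l}$. $C_m^k=\frac{m!}{k!(m-k)!}$ for integers $m\ge k\ge 0$, and $C_m^k=0$ otherwise. *)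

theory Defs
  imports Main
begin

type_synonym 'a graph = "'a set \<times> 'a set set"

definition simple_graph :: "'a graph \<Rightarrow> bool" where
  "simple_graph G \<longleftrightarrow> finite (fst G) \<and> (\<forall>e\<in>snd G. e \<subseteq> fst G \<and> card e = 2)"

definition adj :: "'a graph \<Rightarrow> 'a \<Rightarrow> 'a \<Rightarrow> bool" where
  "adj G u v \<longleftrightarrow> {u, v} \<in> snd G"

fun is_walk :: "'a graph \<Rightarrow> 'a list \<Rightarrow> bool" where
  "is_walk G [] = False"
| "is_walk G [v] = (v \<in> fst G)"
| "is_walk G (u # v # vs) = (u \<in> fst G \<and> adj G u v \<and> is_walk G (v # vs))"

definition connected_graph :: "'a graph \<Rightarrow> bool" where
  "connected_graph G \<longleftrightarrow> fst G \<noteq> {} \<and>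
     (\<forall>u\<in>fst G. \<forall>v\<in>fst G. \<exists>p. is_walk G p \<and> hd p = u \<and> last p = v)"

definition gdist :: "'a graph \<Rightarrow> 'a \<Rightarrow> 'a \<Rightarrow> nat" where
  "gdist G u v = (LEAST k. \<exists>p. is_walk G p \<and> hd p = u \<and> last p = v \<and> length p = Suc k)"

definition diameter :: "'a graph \<Rightarrow> nat" where
  "diameter G = Max {gdist G u v | u v. u \<in> fst G \<and> v \<in> fst G}"

definition has_diameter :: "'a graph \<Rightarrow> nat \<Rightarrow> bool" where
  "has_diameter G d \<longleftrightarrow> connected_graph G \<and> diameter G = d"

definition degree :: "'a graph \<Rightarrow> 'a \<Rightarrow> nat" where
  "degree G v = card {u \<in> fst G. adj G v u}"

definition min_degree :: "'a graph \<Rightarrow> nat" where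
  "min_degree G = Min (degree G ` fst G)"

text \<open>H is a (not necessarily induced) subgraph of G.\<close>
definition subgraph :: "'a graph \<Rightarrow> 'a graph \<Rightarrow> bool" where
  "subgraph H G \<longleftrightarrow> fst H \<subseteq> fst G \<and> snd H \<subseteq> snd G \<and> (\<forall>e\<in>snd H. e \<subseteq> fst H)"

definition graph_iso :: "'b graph \<Rightarrow> 'a graph \<Rightarrow> bool" where
  "graph_iso F H \<longleftrightarrow> (\<exists>\<phi>. bij_betw \<phi> (fst F) (fst H) \<and> snd H = (\<lambda>e. \<phi> ` e) ` snd F)"

definition F_degree :: "'b graph \<Rightarrow> 'a graph \<Rightarrow> 'a \<Rightarrow> nat" where
  "F_degree F G v = card {H. subgraph H G \<and> graph_iso F H \<and> v \<in> fst H}"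

definition A_graph :: "nat \<Rightarrow> nat graph" where
  "A_graph l = ({1..2*l-1}, {{i, j} | i j. i \<in> {1..2*l-1} \<and> j \<in> {1..2*l-1} \<and> i \<noteq> j
                                         \<and> (if i \<le> j then j - i else i - j) \<le> l - 1})"

definition F2l_graph :: "nat \<Rightarrow> nat \<Rightarrow> nat graph" where
  "F2l_graph l t = (insert (2*l) (fst (A_graph l)),
                    snd (A_graph l) \<union> {{i, 2*l} | i. i \<in> {1..t}})"

end

theory Submission
  imports Defs "HOL-Combinatorics.Permutations"
begin

(* A copy of F in a graph is determined by its vertex set W and a bijection from V(F) onto W,
   so each W carries at most n! copies.

   Upper bound for f_{2l}: let v be the vertex of F sent to 2l. Its at least t neighbours are
   sent injectively into the neighbourhood {1..t} of 2l, hence onto it. Every other vertex of F is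
   within distance 2 of v, so its image is adjacent to some i \<le> t and therefore at most t + l - 1.
   Thus W = {2l} \<union> {1..t} \<union> S with S an (n-t-1)-subset of {t+1..t+l-1}, and
   f_{2l} \<le> n! C(l-1, n-t-1).

   Lower bound for z_1: {1..l} is a clique of A_{2l-1}, so each of the C(l-1, n-1) n-subsets of
   {1..l} containing 1 carries a copy of F through 1. *)

lemma simple_graph_edge:
  assumes "simple_graph G" "{a, b} \<in> snd G"
  shows "a \<noteq> b" "a \<in> fst G" "b \<in> fst G"
  using assms unfolding simple_graph_def by (metis card_2_iff doubleton_eq_iff insert_subset)+

lemma adj_commute: "adj G a b \<longleftrightarrow> adj G b a"
  by (simp add: adj_def insert_commute)

lemma degree_less_card:
  assumes "simple_graph G" "v \<in> fst G"
  shows "degree G v < card (fst G)"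
proof -
  have fin: "finite (fst G)" using assms(1) unfolding simple_graph_def by simp
  have "{u \<in> fst G. adj G v u} \<subseteq> fst G - {v}"
    using simple_graph_edge[OF assms(1)] unfolding adj_def by auto
  then have "degree G v \<le> card (fst G - {v})"
    unfolding degree_def using fin by (intro card_mono) auto
  also have "\<dots> < card (fst G)" using fin assms(2) by (rule card_Diff1_less)
  finally show ?thesis .
qed

lemma min_degree_le_degree:
  "finite (fst G) \<Longrightarrow> v \<in> fst G \<Longrightarrow> min_degree G \<le> degree G v"
  unfolding min_degree_def by simp

lemma min_degree_less_card:
  assumes "simple_graph G" "fst G \<noteq> {}"
  shows "min_degree G < card (fst G)"
proof -
  obtain v where "v \<in> fst G" using assms(2) by blast
  then show ?thesis using assms(1) min_degree_le_degree degree_less_card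
    unfolding simple_graph_def by (meson le_less_trans)
qed

lemma walk_of_length_gdist:
  assumes "connected_graph G" "u \<in> fst G" "v \<in> fst G"
  obtains p where "is_walk G p" "hd p = u" "last p = v" "length p = Suc (gdist G u v)"
proof -
  let ?P = "\<lambda>k. \<exists>p. is_walk G p \<and> hd p = u \<and> last p = v \<and> length p = Suc k"
  obtain p where p: "is_walk G p" "hd p = u" "last p = v"
    using assms unfolding connected_graph_def by blast
  have "p \<noteq> []" using p(1) by auto
  then have "?P (length p - 1)" using p by (intro exI[of _ p]) auto
  then have "?P (gdist G u v)" unfolding gdist_def by (rule LeastI)
  then show ?thesis using that by blast
qed

lemma gdist_le_diameter:
  assumes "finite (fst G)" "u \<in> fst G" "v \<in> fst G"
  shows "gdist G u v \<le> diameter G"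
  unfolding diameter_def using assms by (intro Max_ge finite_image_set2) auto

lemma short_walk_ends:
  assumes "is_walk G p" "length p \<le> 3"
  shows "hd p = last p \<or> adj G (hd p) (last p) \<or> (\<exists>x\<in>fst G. adj G (hd p) x \<and> adj G x (last p))"
  using assms by (cases "(G, p)" rule: is_walk.cases) (auto simp: numeral_3_eq_3 le_Suc_eq length_Suc_conv)

lemma diameter_le_2_cases:
  assumes "finite (fst G)" "connected_graph G" "diameter G \<le> 2" "u \<in> fst G" "v \<in> fst G"
  shows "u = v \<or> adj G u v \<or> (\<exists>x\<in>fst G. adj G u x \<and> adj G x v)"
proof -
  obtain p where "is_walk G p" "hd p = u" "last p = v" "length p = Suc (gdist G u v)"
    using walk_of_length_gdist assms(2,4,5) by metis
  moreover have "gdist G u v \<le> 2" using gdist_le_diameter assms by (metis order_trans)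
  ultimately show ?thesis using short_walk_ends by fastforce
qed

definition iso_map :: "('b \<Rightarrow> 'a) \<Rightarrow> 'b graph \<Rightarrow> 'a graph \<Rightarrow> bool" where
  "iso_map \<phi> F H \<longleftrightarrow> bij_betw \<phi> (fst F) (fst H) \<and> snd H = (\<lambda>e. \<phi> ` e) ` snd F"

lemma graph_iso_iff_iso_map: "graph_iso F H \<longleftrightarrow> (\<exists>\<phi>. iso_map \<phi> F H)"
  unfolding graph_iso_def iso_map_def ..

lemma iso_map_adj:
  assumes "iso_map \<phi> F H" "subgraph H G" "adj F a b"
  shows "adj G (\<phi> a) (\<phi> b)"
proof -
  have "\<phi> ` {a, b} \<in> snd H" using assms(1,3) unfolding iso_map_def adj_def by blast
  then show ?thesis using assms(2) unfolding subgraph_def adj_def by auto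
qed

lemma iso_map_neighbour_ne:
  assumes "simple_graph F" "iso_map \<phi> F H" "v \<in> fst F" "adj F v u"
  shows "\<phi> u \<noteq> \<phi> v"
proof -
  have "u \<noteq> v" "u \<in> fst F" using simple_graph_edge[OF assms(1)] assms(4) unfolding adj_def by blast+
  then show ?thesis using assms(2,3) unfolding iso_map_def bij_betw_def inj_on_def by blast
qed

lemma card_vertices_graph_iso: "graph_iso F H \<Longrightarrow> card (fst H) = card (fst F)"
  unfolding graph_iso_def by (metis bij_betw_same_card)

lemma copies_on_vertex_set_eq:
  assumes "simple_graph F" "bij_betw \<beta> (fst F) W"
  shows "{H. graph_iso F H \<and> fst H = W} =
         (\<lambda>p. (W, (\<lambda>e. (\<beta> \<circ> p) ` e) ` snd F)) ` {p. p permutes fst F}"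
proof (intro equalityI subsetI)
  fix H assume "H \<in> {H. graph_iso F H \<and> fst H = W}"
  then obtain \<phi> where \<phi>: "bij_betw \<phi> (fst F) W" and H: "H = (W, (\<lambda>e. \<phi> ` e) ` snd F)"
    unfolding graph_iso_def by (auto simp: prod_eq_iff)
  define p where "p x = (if x \<in> fst F then inv_into (fst F) \<beta> (\<phi> x) else x)" for x
  have "bij_betw (inv_into (fst F) \<beta> \<circ> \<phi>) (fst F) (fst F)"
    using \<phi> bij_betw_inv_into[OF assms(2)] by (rule bij_betw_trans)
  then have "bij_betw p (fst F) (fst F)"
    by (rule bij_betw_cong[THEN iffD1, rotated]) (simp add: p_def)
  then have p: "p permutes fst F" by (rule bij_imp_permutes) (simp add: p_def)
  have "(\<beta> \<circ> p) x = \<phi> x" if "x \<in> fst F" for x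
  proof -
    have "\<phi> x \<in> \<beta> ` fst F" using bij_betw_apply[OF \<phi> that] bij_betw_imp_surj_on[OF assms(2)] by simp
    then show ?thesis using that by (simp add: p_def f_inv_into_f)
  qed
  moreover have "e \<subseteq> fst F" if "e \<in> snd F" for e
    using assms(1) that unfolding simple_graph_def by blast
  ultimately have "(\<lambda>e. (\<beta> \<circ> p) ` e) ` snd F = (\<lambda>e. \<phi> ` e) ` snd F"
    by (intro image_cong refl) (metis image_cong subsetD)
  then show "H \<in> (\<lambda>p. (W, (\<lambda>e. (\<beta> \<circ> p) ` e) ` snd F)) ` {p. p permutes fst F}"
    using H p by (intro image_eqI[where x = p]) simp_all
next
  fix H assume "H \<in> (\<lambda>p. (W, (\<lambda>e. (\<beta> \<circ> p) ` e) ` snd F)) ` {p. p permutes fst F}"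
  then obtain p where "p permutes fst F" "H = (W, (\<lambda>e. (\<beta> \<circ> p) ` e) ` snd F)" by blast
  moreover have "bij_betw (\<beta> \<circ> p) (fst F) W"
    using permutes_imp_bij[OF \<open>p permutes fst F\<close>] assms(2) by (rule bij_betw_trans)
  ultimately show "H \<in> {H. graph_iso F H \<and> fst H = W}" unfolding graph_iso_def by auto
qed

lemma
  assumes "simple_graph F"
  shows finite_copies_on_vertex_set: "finite {H. graph_iso F H \<and> fst H = W}"
    and card_copies_on_vertex_set_le: "card {H. graph_iso F H \<and> fst H = W} \<le> fact (card (fst F))"
proof -
  have fin: "finite (fst F)" using assms unfolding simple_graph_def by simp
  have "finite {H. graph_iso F H \<and> fst H = W} \<and> card {H. graph_iso F H \<and> fst H = W} \<le> fact (card (fst F))"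
  proof (cases "\<exists>\<beta>. bij_betw \<beta> (fst F) W")
    case True
    then obtain \<beta> where "bij_betw \<beta> (fst F) W" by blast
    then show ?thesis
      unfolding copies_on_vertex_set_eq[OF assms \<open>bij_betw \<beta> (fst F) W\<close>]
      using card_image_le[OF finite_permutations[OF fin]] finite_permutations[OF fin]
      unfolding card_permutations[OF refl fin] by blast
  next
    case False
    then have "{H. graph_iso F H \<and> fst H = W} = {}" unfolding graph_iso_def by blast
    then show ?thesis by (simp only:) simp
  qed
  then show "finite {H. graph_iso F H \<and> fst H = W}"
    and "card {H. graph_iso F H \<and> fst H = W} \<le> fact (card (fst F))" by auto
qed

lemma F_degree_le_card_vertex_sets:
  assumes "simple_graph F" "finite \<W>"
    and "\<And>H. subgraph H G \<Longrightarrow> graph_iso F H \<Longrightarrow> v \<in> fst H \<Longrightarrow> fst H \<in> \<W>"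
  shows "F_degree F G v \<le> card \<W> * fact (card (fst F))"
proof -
  have "{H. subgraph H G \<and> graph_iso F H \<and> v \<in> fst H} \<subseteq> (\<Union>W\<in>\<W>. {H. graph_iso F H \<and> fst H = W})"
    using assms(3) by blast
  then have "F_degree F G v \<le> card (\<Union>W\<in>\<W>. {H. graph_iso F H \<and> fst H = W})"
    unfolding F_degree_def
    using assms(2) finite_copies_on_vertex_set[OF assms(1)] by (intro card_mono) auto
  also have "\<dots> \<le> (\<Sum>W\<in>\<W>. card {H. graph_iso F H \<and> fst H = W})"
    using assms(2) by (rule card_UN_le)
  also have "\<dots> \<le> (\<Sum>W\<in>\<W>. fact (card (fst F)))"
    by (rule sum_mono) (rule card_copies_on_vertex_set_le[OF assms(1)])
  also have "\<dots> = card \<W> * fact (card (fst F))" by simp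
  finally show ?thesis .
qed

definition clique :: "'a graph \<Rightarrow> 'a set \<Rightarrow> bool" where
  "clique G W \<longleftrightarrow> W \<subseteq> fst G \<and> (\<forall>a\<in>W. \<forall>b\<in>W. a \<noteq> b \<longrightarrow> adj G a b)"

lemma subgraph_copy_on_clique:
  assumes "simple_graph F" "clique G W" "bij_betw \<phi> (fst F) W"
  shows "subgraph (W, (\<lambda>e. \<phi> ` e) ` snd F) G"
proof -
  have "\<phi> ` e \<in> snd G \<and> \<phi> ` e \<subseteq> W" if "e \<in> snd F" for e
  proof -
    obtain a b where e: "e = {a, b}" using assms(1) \<open>e \<in> snd F\<close>
      unfolding simple_graph_def by (metis card_2_iff)
    then have "a \<noteq> b" "a \<in> fst F" "b \<in> fst F" using simple_graph_edge assms(1) that by metis+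
    then have "\<phi> a \<noteq> \<phi> b" "\<phi> a \<in> W" "\<phi> b \<in> W"
      using assms(3) unfolding bij_betw_def inj_on_def by auto
    then show ?thesis using assms(2) e unfolding clique_def adj_def by auto
  qed
  then show ?thesis using assms(2) unfolding subgraph_def clique_def by auto
qed

lemma card_cliques_le_F_degree:
  fixes F :: "'b graph" and G :: "'a graph"
  assumes "simple_graph F" "simple_graph G"
  shows "card {W. clique G W \<and> v \<in> W \<and> card W = card (fst F)} \<le> F_degree F G v"
proof -
  let ?\<W> = "{W. clique G W \<and> v \<in> W \<and> card W = card (fst F)}"
  have finF: "finite (fst F)" and finG: "finite (fst G)"
    using assms unfolding simple_graph_def by simp_all
  define \<beta> where "\<beta> W = (SOME \<phi>. bij_betw \<phi> (fst F) W)" for W :: "'a set"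
  define copy where "copy W = (W, (\<lambda>e. \<beta> W ` e) ` snd F)" for W
  have "copy W \<in> {H. subgraph H G \<and> graph_iso F H \<and> v \<in> fst H}" if W: "W \<in> ?\<W>" for W
  proof -
    have "finite W" using W finG unfolding clique_def by (auto intro: finite_subset)
    then have "\<exists>\<phi>. bij_betw \<phi> (fst F) W" using W finF by (auto intro: finite_same_card_bij)
    then have \<beta>: "bij_betw (\<beta> W) (fst F) W" unfolding \<beta>_def by (rule someI_ex)
    have "clique G W" "v \<in> W" using W by auto
    then show ?thesis
      using subgraph_copy_on_clique[OF assms(1) \<open>clique G W\<close> \<beta>] \<beta>
      unfolding copy_def graph_iso_def by auto
  qed
  moreover have "inj_on copy ?\<W>" by (rule inj_onI) (simp add: copy_def)
  moreover have "finite {H. subgraph H G \<and> graph_iso F H \<and> v \<in> fst H}"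
  proof (rule finite_subset)
    show "{H. subgraph H G \<and> graph_iso F H \<and> v \<in> fst H} \<subseteq> Pow (fst G) \<times> Pow (snd G)"
      unfolding subgraph_def by auto
    have "snd G \<subseteq> Pow (fst G)" using assms(2) unfolding simple_graph_def by auto
    then show "finite (Pow (fst G) \<times> Pow (snd G))" using finG by (auto intro: finite_subset)
  qed
  ultimately show ?thesis unfolding F_degree_def using card_inj_on_le[of copy ?\<W>] by blast
qed

lemma card_sets_between:
  assumes "finite B" "A \<subseteq> B" "card A \<le> k"
  shows "card {W. A \<subseteq> W \<and> W \<subseteq> B \<and> card W = k} = (card B - card A) choose (k - card A)"
proof -
  have finA: "finite A" using assms(1,2) by (rule rev_finite_subset)
  have "bij_betw (\<lambda>W. W - A) {W. A \<subseteq> W \<and> W \<subseteq> B \<and> card W = k}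
          {S. S \<subseteq> B - A \<and> card S = k - card A}"
  proof (rule bij_betw_byWitness[where f' = "\<lambda>S. A \<union> S"])
    show "\<forall>W\<in>{W. A \<subseteq> W \<and> W \<subseteq> B \<and> card W = k}. A \<union> (W - A) = W" by auto
    show "\<forall>S\<in>{S. S \<subseteq> B - A \<and> card S = k - card A}. A \<union> S - A = S" by auto
    show "(\<lambda>W. W - A) ` {W. A \<subseteq> W \<and> W \<subseteq> B \<and> card W = k} \<subseteq> {S. S \<subseteq> B - A \<and> card S = k - card A}"
      using assms(1) finA by (auto simp: card_Diff_subset dest: finite_subset)
    have "card (A \<union> S) = k" if "S \<subseteq> B - A" "card S = k - card A" for S
      using that finA assms(1,3) by (subst card_Un_disjoint) (auto intro: finite_subset)
    then show "(\<lambda>S. A \<union> S) ` {S. S \<subseteq> B - A \<and> card S = k - card A} \<subseteq> {W. A \<subseteq> W \<and> W \<subseteq> B \<and> card W = k}"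
      using assms(2) by auto
  qed
  then show ?thesis
    using n_subsets[of "B - A" "k - card A"] assms(1,2) by (simp add: bij_betw_same_card card_Diff_subset finA)
qed

lemma simple_graph_A_graph: "simple_graph (A_graph l)"
  unfolding simple_graph_def A_graph_def by auto

lemma clique_A_graph:
  assumes "W \<subseteq> {1..l}"
  shows "clique (A_graph l) W"
  unfolding clique_def
proof (intro conjI ballI impI)
  have "{1..l} \<subseteq> fst (A_graph l)" by (auto simp: A_graph_def)
  with assms show "W \<subseteq> fst (A_graph l)" by (rule order_trans)
  fix a b assume "a \<in> W" "b \<in> W" "a \<noteq> b"
  then have "a \<in> {1..l}" "b \<in> {1..l}" using assms by auto
  then show "adj (A_graph l) a b"
    using \<open>a \<noteq> b\<close> unfolding adj_def A_graph_def snd_conv mem_Collect_eq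
    by (intro exI[of _ a] exI[of _ b]) auto
qed

lemma F_degree_A_graph_ge:
  assumes "simple_graph F" "fst F \<noteq> {}" "card (fst F) \<le> l"
  shows "(l - 1) choose (card (fst F) - 1) \<le> F_degree F (A_graph l) 1"
proof -
  let ?n = "card (fst F)"
  have "?n \<ge> 1" using assms(1,2) unfolding simple_graph_def by (simp add: Suc_le_eq card_gt_0_iff)
  then have "(l - 1) choose (?n - 1) = card {W. {1} \<subseteq> W \<and> W \<subseteq> {1..l} \<and> card W = ?n}"
    using card_sets_between[of "{1..l}" "{1}" ?n] assms(3) by simp
  also have "\<dots> \<le> card {W. clique (A_graph l) W \<and> 1 \<in> W \<and> card W = ?n}"
  proof (rule card_mono)
    show "finite {W. clique (A_graph l) W \<and> 1 \<in> W \<and> card W = ?n}"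
      by (rule finite_subset[of _ "Pow (fst (A_graph l))"]) (auto simp: clique_def A_graph_def)
    show "{W. {1} \<subseteq> W \<and> W \<subseteq> {1..l} \<and> card W = ?n} \<subseteq> {W. clique (A_graph l) W \<and> 1 \<in> W \<and> card W = ?n}"
      using clique_A_graph by auto
  qed
  also have "\<dots> \<le> F_degree F (A_graph l) 1"
    using card_cliques_le_F_degree[OF assms(1) simple_graph_A_graph] .
  finally show ?thesis .
qed

lemma A_graph_edge_subset: "e \<in> snd (A_graph l) \<Longrightarrow> e \<subseteq> {1..2*l-1}"
  unfolding A_graph_def by auto

lemma F2l_graph_adj_top: "adj (F2l_graph l t) (2*l) w \<Longrightarrow> w \<noteq> 2*l \<Longrightarrow> w \<in> {1..t}"
  unfolding adj_def F2l_graph_def using A_graph_edge_subset[of "{2*l, w}" l]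
  by (auto simp: doubleton_eq_iff)

lemma F2l_graph_adj_le:
  assumes "adj (F2l_graph l t) a w" "a \<noteq> 2*l" "w \<noteq> 2*l"
  shows "w \<le> a + l - 1"
proof -
  have "{a, w} \<in> snd (A_graph l)"
    using assms unfolding adj_def F2l_graph_def by (auto simp: doubleton_eq_iff)
  then obtain i j where "{a, w} = {i, j}" "i \<noteq> j" "(if i \<le> j then j - i else i - j) \<le> l - 1"
    unfolding A_graph_def by auto
  then show ?thesis by (auto simp: doubleton_eq_iff split: if_splits)
qed

lemma F2l_graph_vertex: "w \<in> fst (F2l_graph l t) \<Longrightarrow> w \<noteq> 2*l \<Longrightarrow> w \<in> {1..2*l-1}"
  unfolding F2l_graph_def A_graph_def by auto

lemma F2l_graph_copy_adj_top:
  assumes "simple_graph F" "subgraph H (F2l_graph l t)" "iso_map \<phi> F H"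
    and "v \<in> fst F" "\<phi> v = 2*l" "adj F v u"
  shows "\<phi> u \<in> {1..t}"
proof (rule F2l_graph_adj_top)
  show "adj (F2l_graph l t) (2*l) (\<phi> u)" using iso_map_adj[OF assms(3,2,6)] assms(5) by simp
  show "\<phi> u \<noteq> 2*l" using iso_map_neighbour_ne[OF assms(1,3,4,6)] assms(5) by simp
qed

lemma F2l_graph_copy_contains_low_vertices:
  assumes "simple_graph F" "t \<le> min_degree F" "subgraph H (F2l_graph l t)" "iso_map \<phi> F H"
    and "v \<in> fst F" "\<phi> v = 2*l"
  shows "{1..t} \<subseteq> fst H"
proof -
  define N where "N = {u \<in> fst F. adj F v u}"
  have inj: "inj_on \<phi> (fst F)" and img: "\<phi> ` fst F = fst H"
    using assms(4) unfolding iso_map_def bij_betw_def by simp_all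
  have "\<phi> ` N \<subseteq> {1..t}" using F2l_graph_copy_adj_top[OF assms(1,3,4,5,6)] unfolding N_def by auto
  moreover have "t \<le> card (\<phi> ` N)"
  proof -
    have "card (\<phi> ` N) = degree F v"
      unfolding N_def degree_def by (rule card_image) (rule inj_on_subset[OF inj], auto)
    moreover have "finite (fst F)" using assms(1) unfolding simple_graph_def by simp
    then have "min_degree F \<le> degree F v" using assms(5) by (rule min_degree_le_degree)
    ultimately show ?thesis using assms(2) by simp
  qed
  ultimately have "\<phi> ` N = {1..t}"
    using card_mono[OF finite_atLeastAtMost, of "\<phi> ` N" 1 t] by (intro card_subset_eq) auto
  then show ?thesis using img N_def by auto
qed

lemma F2l_graph_copy_vertex_le:
  assumes F: "simple_graph F" "connected_graph F" "diameter F \<le> 2"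
    and H: "subgraph H (F2l_graph l t)" "iso_map \<phi> F H" "v \<in> fst F" "\<phi> v = 2*l"
    and w: "w \<in> fst H" "w \<noteq> 2*l"
  shows "w \<in> {1..t+l-1}"
proof -
  have "w \<in> fst (F2l_graph l t)" using w(1) H(1) unfolding subgraph_def by blast
  with w(2) have w_range: "w \<in> {1..2*l-1}" by (intro F2l_graph_vertex)
  have "w \<in> \<phi> ` fst F" using w(1) H(2) unfolding iso_map_def bij_betw_def by simp
  then obtain u where u: "u \<in> fst F" "\<phi> u = w" by blast
  have "finite (fst F)" using F(1) unfolding simple_graph_def by simp
  moreover have "u \<noteq> v" using u H(4) w(2) by auto
  ultimately consider "adj F u v" | x where "adj F u x" "adj F x v"
    using diameter_le_2_cases[OF _ F(2,3) u(1) H(3)] by blast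
  then have "w \<le> t + l - 1"
  proof cases
    case 1
    then have "adj F v u" by (simp add: adj_commute)
    then have "w \<in> {1..t}" using F2l_graph_copy_adj_top[OF F(1) H(1-4)] u(2) by blast
    then show ?thesis using w_range by auto
  next
    case (2 x)
    then have "adj F v x" "adj F x u" by (simp_all add: adj_commute)
    then have x: "\<phi> x \<in> {1..t}" "\<phi> x \<noteq> 2*l"
      using F2l_graph_copy_adj_top[OF F(1) H(1-4)] iso_map_neighbour_ne[OF F(1) H(2,3)] H(4)
      by simp_all
    moreover have "adj (F2l_graph l t) (\<phi> x) w"
      using iso_map_adj[OF H(2,1) \<open>adj F x u\<close>] u(2) by simp
    ultimately have "w \<le> \<phi> x + l - 1" using w(2) by (intro F2l_graph_adj_le)
    then show ?thesis using x by auto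
  qed
  then show ?thesis using w_range by auto
qed

lemma F2l_graph_copy_vertices:
  assumes F: "simple_graph F" "connected_graph F" "diameter F \<le> 2" "t \<le> min_degree F"
    and H: "subgraph H (F2l_graph l t)" "graph_iso F H" "2*l \<in> fst H"
  shows "insert (2*l) {1..t} \<subseteq> fst H" "fst H \<subseteq> insert (2*l) {1..t+l-1}"
proof -
  obtain \<phi> where \<phi>: "iso_map \<phi> F H" using H(2) graph_iso_iff_iso_map by blast
  then have "2*l \<in> \<phi> ` fst F" using H(3) unfolding iso_map_def bij_betw_def by simp
  then obtain v where v: "v \<in> fst F" "\<phi> v = 2*l" by (metis imageE)
  show "insert (2*l) {1..t} \<subseteq> fst H"
    using F2l_graph_copy_contains_low_vertices[OF F(1,4) H(1) \<phi> v] H(3) by simp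
  show "fst H \<subseteq> insert (2*l) {1..t+l-1}"
    using F2l_graph_copy_vertex_le[OF F(1-3) H(1) \<phi> v] by blast
qed

lemma F_degree_F2l_graph_le:
  assumes F: "simple_graph F" "connected_graph F" "diameter F \<le> 2" "t \<le> min_degree F"
    and "card (fst F) \<le> l"
  shows "F_degree F (F2l_graph l t) (2*l) \<le> ((l - 1) choose (card (fst F) - t - 1)) * fact (card (fst F))"
proof -
  let ?n = "card (fst F)" and ?A = "insert (2*l) {1..t}" and ?B = "insert (2*l) {1..t+l-1}"
  have "t < ?n"
    using F(1,2,4) min_degree_less_card unfolding connected_graph_def by fastforce
  then have card_A: "card ?A = t + 1" and card_B: "card ?B = t + l"
    using assms(5) by simp_all
  have "F_degree F (F2l_graph l t) (2*l) \<le> card {W. ?A \<subseteq> W \<and> W \<subseteq> ?B \<and> card W = ?n} * fact ?n"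
  proof (rule F_degree_le_card_vertex_sets[OF F(1)])
    show "finite {W. ?A \<subseteq> W \<and> W \<subseteq> ?B \<and> card W = ?n}" by simp
    fix H assume "subgraph H (F2l_graph l t)" "graph_iso F H" "2*l \<in> fst H"
    then show "fst H \<in> {W. ?A \<subseteq> W \<and> W \<subseteq> ?B \<and> card W = ?n}"
      using F2l_graph_copy_vertices[OF F] card_vertices_graph_iso by blast
  qed
  also have "card {W. ?A \<subseteq> W \<and> W \<subseteq> ?B \<and> card W = ?n} = (card ?B - card ?A) choose (?n - card ?A)"
    using \<open>t < ?n\<close> assms(5) card_A by (intro card_sets_between) auto
  also have "\<dots> = (l - 1) choose (?n - t - 1)" using card_A card_B by simp
  finally show ?thesis .
qed

theorem lemma8:
  fixes F :: "'a graph" and n t l :: nat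
  assumes "simple_graph F"
    and "has_diameter F 2"
    and "n = card (fst F)"
    and "t = min_degree F"
    and "l > n"
    and "(l - 1) choose (n - 1) > fact n * ((l - 1) choose (n - t - 1))"
  shows "F_degree F (F2l_graph l t) (2 * l) < F_degree F (A_graph l) 1"
proof -
  have F: "connected_graph F" "diameter F \<le> 2"
    using assms(2) unfolding has_diameter_def by simp_all
  have "F_degree F (F2l_graph l t) (2 * l) \<le> ((l - 1) choose (n - t - 1)) * fact n"
    using F_degree_F2l_graph_le[OF assms(1) F] assms(3-5) by simp
  moreover have "(l - 1) choose (n - 1) \<le> F_degree F (A_graph l) 1"
    using F_degree_A_graph_ge[OF assms(1)] F(1) assms(3,5) unfolding connected_graph_def by simp
  ultimately show ?thesis using assms(6) by (simp add: mult.commute)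
qed

end
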